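(* Let $s>0$ and $\epsilon\in(0,1)$. Given a polynomial decay stream of $n$ points (decay function $w(t)=t^{-s}$) as input to the block-merging algorithm described in the context, the number of blocks it maintains is $O(\epsilon^{-1}s\log n)$.
   Context: Polynomial decay stream: points arrive sequentially and the $t$-th most recent point has weight $t^{-s}$. Markers: for each $i\in\mathbb N$, $x_i$ is the minimum integer $\ge 2^i$ such that $\frac{1-\epsilon}{(x_i-2^i+1)^s}\le\frac{1+\epsilon}{x_i^s}$, i.e. $\left(\frac{x_i}{x_i-2^i+1}\right)^s\le\frac{1+\epsilon}{1-\epsilon}$. The algorithm partitions the stream into blocks of consecutive points; a block is written $[a,b]$ where $a$ and $b$ are the positions (relative to the start of the stream) of its first and last points, and for each block a coreset (computed by an offline coreset construction algorithm) is stored. When the $n$-th point $p_n$ arrives, the algorithm inserts $[n,n]$ as a new block; then for each block $[a,b]$, if $a+x_i<n$ for some $i$, it merges all blocks in the range $[a,a+2^i-1]$ into a single block (and reduces the union of their coresets to a single coreset). At the end each block $[a,b]$ receives weight $\frac12\left(\frac{1-\epsilon}{a^s}+\frac{1+\epsilon}{b^s}\right)$.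
   Formalization: The number of blocks is at most C (1 + s/epsilon) ln n for all n >= 2, with one constant C > 0 independent of s, epsilon and n, in place of $O(\epsilon^{-1}s\log n)$. Apart from conventions, each condition added here is assumed in the paper as well or is needed for the statement above to hold. *)

theory Defs
  imports "HOL-Analysis.Analysis"
begin

definition marker :: "real \<Rightarrow> real \<Rightarrow> nat \<Rightarrow> nat" where
  "marker s eps i =
     (LEAST x::nat. 2 ^ i \<le> x \<and>
        (real x / real (x - 2 ^ i + 1)) powr s \<le> (1 + eps) / (1 - eps))"

text \<open>Blocks are pairs (a,b)
  (first and last position), kept in increasing order of positions. Each block
  (a,b) is visited from oldest to newest; if a + x_i < n for some i, all blocks
  contained in the range [a, a+2^i-1] are merged into one block (taking the
  largest such i subsumes all smaller ones, since the ranges are nested).\<close>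
function merge_pass :: "real \<Rightarrow> real \<Rightarrow> nat \<Rightarrow> (nat \<times> nat) list \<Rightarrow> (nat \<times> nat) list" where
  "merge_pass s eps n [] = []"
| "merge_pass s eps n ((a, b) # bs) =
     (let I = {i. a + marker s eps i < n} in
      if I = {} then (a, b) # merge_pass s eps n bs
      else
        let e = a + 2 ^ (Max I) - 1;
            inside = filter (\<lambda>(c, d). d \<le> e) bs;
            rest = filter (\<lambda>(c, d). \<not> d \<le> e) bs
        in (a, Max (insert b (snd ` set inside))) # merge_pass s eps n rest)"
  by pat_completeness auto
termination
  by (relation "Wellfounded.measure (\<lambda>(_, _, _, l). length l)") (auto simp: Let_def le_imp_less_Suc)

fun blocks :: "real \<Rightarrow> real \<Rightarrow> nat \<Rightarrow> (nat \<times> nat) list" where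
  "blocks s eps 0 = []"
| "blocks s eps (Suc n) = merge_pass s eps (Suc n) (blocks s eps n @ [(Suc n, Suc n)])"

end

theory Submission
  imports Defs
begin

(* With K = nat \<lceil>s / eps\<rceil> + 1, every marker satisfies 2^i \<le> x_i \<le> K 2^i, since
   (1 + 1/k)^s \<le> exp (s / k) \<le> exp eps \<le> (1 + eps) / (1 - eps) once k \<ge> s / eps.
   Scan a merging pass from the oldest block, which starts at age u = n - a. If u \<ge> 2, the
   block absorbs the range of length 2^M for the largest M with x_M < u; maximality gives
   u \<le> x_(M+1) \<le> 2 K 2^M. Apart from the merged block and at most one block straddling
   the end of its range, all remaining blocks start at age at most u - 2^M \<le> (1 - 1/(2K)) u.
   So every two output blocks decrease 4 K ln u by at least 2, and a pass produces at most
   2 + 4 K ln n blocks. *)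

definition marker_scale :: "real \<Rightarrow> real \<Rightarrow> nat" where
  "marker_scale s eps = nat \<lceil>s / eps\<rceil> + 1"

lemma one_plus_inverse_powr_le:
  fixes s eps k :: real
  assumes s: "0 < s" and eps: "0 < eps" "eps < 1" and k: "s / eps \<le> k"
  shows "(1 + 1 / k) powr s \<le> (1 + eps) / (1 - eps)"
proof -
  have "0 < k" using k s eps by (smt (verit) divide_pos_pos)
  have "s * ln (1 + 1 / k) \<le> s * (1 / k)"
    using ln_add_one_self_le_self[of "1 / k"] \<open>0 < k\<close> s by (intro mult_left_mono) auto
  also have "\<dots> \<le> eps" using k \<open>0 < k\<close> s eps by (simp add: field_simps)
  finally have "(1 + 1 / k) powr s \<le> exp eps"
    using \<open>0 < k\<close> by (simp add: powr_def add_pos_pos)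
  also have "exp eps \<le> 1 / (1 - eps)"
  proof -
    have "(1 - eps) * exp eps \<le> exp (- eps) * exp eps"
      using exp_ge_add_one_self[of "- eps"] by (intro mult_right_mono) auto
    then show ?thesis using eps by (simp add: field_simps exp_minus)
  qed
  also have "\<dots> \<le> (1 + eps) / (1 - eps)" using eps by (simp add: divide_right_mono)
  finally show ?thesis .
qed

lemma marker_condition_at_scale:
  fixes s eps :: real and i :: nat
  assumes s: "0 < s" and eps: "0 < eps" "eps < 1"
  defines "x \<equiv> 2 ^ i * marker_scale s eps"
  shows "2 ^ i \<le> x \<and> (real x / real (x - 2 ^ i + 1)) powr s \<le> (1 + eps) / (1 - eps)"
proof
  define k where "k = nat \<lceil>s / eps\<rceil>"
  define m :: real where "m = 2 ^ i"
  have "s / eps \<le> k" unfolding k_def by linarith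
  moreover have "0 < s / eps" using s eps by simp
  ultimately have "1 \<le> k" by linarith
  have "m \<ge> 1" unfolding m_def by simp
  have x: "x = 2 ^ i * k + 2 ^ i" unfolding x_def marker_scale_def k_def by simp
  then show "2 ^ i \<le> x" by simp
  have "real x / real (x - 2 ^ i + 1) = m * (k + 1) / (m * k + 1)"
    unfolding x m_def by (simp add: algebra_simps)
  also have "\<dots> \<le> m * (k + 1) / (m * k)"
    using \<open>m \<ge> 1\<close> \<open>1 \<le> k\<close> by (intro divide_left_mono) (auto intro!: mult_pos_pos add_pos_pos)
  also have "\<dots> = 1 + 1 / k" using \<open>m \<ge> 1\<close> \<open>1 \<le> k\<close> by (simp add: field_simps)
  finally have "(real x / real (x - 2 ^ i + 1)) powr s \<le> (1 + 1 / k) powr s"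
    using s by (intro powr_mono2) auto
  also have "\<dots> \<le> (1 + eps) / (1 - eps)"
    using one_plus_inverse_powr_le[OF s eps \<open>s / eps \<le> k\<close>] .
  finally show "(real x / real (x - 2 ^ i + 1)) powr s \<le> (1 + eps) / (1 - eps)" .
qed

lemma marker_bounds:
  assumes "0 < s" "0 < eps" "eps < 1"
  shows "2 ^ i \<le> marker s eps i" "marker s eps i \<le> 2 ^ i * marker_scale s eps"
proof -
  let ?P = "\<lambda>x. 2 ^ i \<le> x \<and> (real x / real (x - 2 ^ i + 1)) powr s \<le> (1 + eps) / (1 - eps)"
  have "?P (2 ^ i * marker_scale s eps)" by (rule marker_condition_at_scale[OF assms])
  then show "2 ^ i \<le> marker s eps i" "marker s eps i \<le> 2 ^ i * marker_scale s eps"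
    unfolding marker_def using LeastI[of ?P] Least_le[of ?P] by blast+
qed

lemma marker_0:
  assumes "0 \<le> eps" "eps < 1"
  shows "marker s eps 0 = 1"
  unfolding marker_def
  by (rule Least_equality) (use assms in \<open>auto simp: field_simps\<close>)

lemma marker_scale_bounds:
  assumes "0 < s" "0 < eps"
  shows "2 \<le> marker_scale s eps" "real (marker_scale s eps) \<le> s / eps + 2"
proof -
  have "0 < s / eps" using assms by simp
  then show "2 \<le> marker_scale s eps" "real (marker_scale s eps) \<le> s / eps + 2"
    unfolding marker_scale_def by linarith+
qed

definition precedes :: "nat \<times> nat \<Rightarrow> nat \<times> nat \<Rightarrow> bool" where
  "precedes p q \<longleftrightarrow> snd p < fst q"

definition ordered_blocks :: "(nat \<times> nat) list \<Rightarrow> bool" where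
  "ordered_blocks bs \<longleftrightarrow> sorted_wrt precedes bs \<and> (\<forall>p\<in>set bs. fst p \<le> snd p)"

lemma sorted_wrt_related:
  "sorted_wrt R xs \<Longrightarrow> x \<in> set xs \<Longrightarrow> y \<in> set xs \<Longrightarrow> x = y \<or> R x y \<or> R y x"
  by (induction xs) auto

lemma merge_pass_Cons:
  "\<exists>B P. merge_pass s eps n ((a, b) # bs) = (a, B) # merge_pass s eps n (filter P bs)"
proof (cases "{i. a + marker s eps i < n} = {}")
  case True
  then show ?thesis by (auto intro!: exI[of _ "\<lambda>_. True"])
qed (auto simp: Let_def)

lemma length_merge_pass_le: "length (merge_pass s eps n bs) \<le> length bs"
proof (induction bs rule: length_induct)
  case (1 bs)
  show ?case
  proof (cases bs)
    case (Cons p bs')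
    obtain B P where "merge_pass s eps n (p # bs') = (fst p, B) # merge_pass s eps n (filter P bs')"
      using merge_pass_Cons[of s eps n "fst p" "snd p" bs'] by auto
    moreover have "length (filter P bs') < length bs"
      using Cons by (simp add: le_imp_less_Suc)
    then have "length (merge_pass s eps n (filter P bs')) \<le> length bs'"
      using "1.IH" le_trans[OF _ length_filter_le] by blast
    ultimately show ?thesis using Cons by simp
  qed simp
qed

lemma ordered_blocks_Cons:
  "ordered_blocks ((a, b) # bs) \<longleftrightarrow> a \<le> b \<and> (\<forall>q\<in>set bs. b < fst q) \<and> ordered_blocks bs"
  by (auto simp: ordered_blocks_def precedes_def)

lemma ordered_blocks_filter: "ordered_blocks bs \<Longrightarrow> ordered_blocks (filter P bs)"
  unfolding ordered_blocks_def by (auto intro: sorted_wrt_filter)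

lemma ordered_blocks_snoc:
  assumes "ordered_blocks bs" "\<forall>p\<in>set bs. snd p < c" "c \<le> d"
  shows "ordered_blocks (bs @ [(c, d)])"
  using assms unfolding ordered_blocks_def by (auto simp: sorted_wrt_append precedes_def)

lemma ordered_merge_pass:
  assumes "ordered_blocks bs"
  shows "ordered_blocks (merge_pass s eps n bs) \<and>
    fst ` set (merge_pass s eps n bs) \<subseteq> fst ` set bs \<and>
    snd ` set (merge_pass s eps n bs) \<subseteq> snd ` set bs"
  using assms
proof (induction s eps n bs rule: merge_pass.induct)
  case (2 s eps n a b bs)
  have ord: "a \<le> b" "\<forall>q\<in>set bs. b < fst q" "ordered_blocks bs"
    using "2.prems" by (simp_all add: ordered_blocks_Cons)
  show ?case
  proof (cases "{i. a + marker s eps i < n} = {}")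
    case True
    then have mp: "merge_pass s eps n ((a, b) # bs) = (a, b) # merge_pass s eps n bs" by simp
    note IH = "2.IH"(1)[OF refl True ord(3)]
    then have "\<forall>q\<in>set (merge_pass s eps n bs). b < fst q" using ord(2) by fastforce
    then show ?thesis unfolding mp using IH ord by (auto simp: ordered_blocks_Cons)
  next
    case False
    define e where "e = a + 2 ^ Max {i. a + marker s eps i < n} - 1"
    define inside where "inside = filter (\<lambda>(c, d). d \<le> e) bs"
    define rest where "rest = filter (\<lambda>(c, d). \<not> d \<le> e) bs"
    define B where "B = Max (insert b (snd ` set inside))"
    have mp: "merge_pass s eps n ((a, b) # bs) = (a, B) # merge_pass s eps n rest"
      using False by (simp only: merge_pass.simps Let_def if_False e_def inside_def rest_def B_def)
    have "ordered_blocks rest" unfolding rest_def using ord(3) by (rule ordered_blocks_filter)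
    then have IH: "ordered_blocks (merge_pass s eps n rest)"
        "fst ` set (merge_pass s eps n rest) \<subseteq> fst ` set rest"
        "snd ` set (merge_pass s eps n rest) \<subseteq> snd ` set rest"
      using "2.IH"(2)[OF refl False e_def inside_def rest_def] by simp_all
    have B: "B \<in> insert b (snd ` set inside)" "b \<le> B" unfolding B_def by (rule Max_in, simp_all)
    have B_before: "B < fst q" if "q \<in> set rest" for q
    proof -
      have q: "q \<in> set bs" "e < snd q" using that unfolding rest_def by auto
      have "snd p < fst q" if "p \<in> set inside" for p
      proof -
        have p: "p \<in> set bs" "snd p \<le> e" using that unfolding inside_def by auto
        moreover have "fst p \<le> snd p" using p(1) ord(3) by (auto simp: ordered_blocks_def)
        moreover have "p = q \<or> precedes p q \<or> precedes q p"
          using sorted_wrt_related[of precedes bs p q] p(1) q(1) ord(3) by (simp add: ordered_blocks_def)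
        ultimately show ?thesis using q(2) by (auto simp: precedes_def)
      qed
      then show ?thesis using B(1) ord(2) q(1) by auto
    qed
    have rest: "set rest \<subseteq> set bs" and inside: "set inside \<subseteq> set bs"
      unfolding rest_def inside_def by auto
    have "fst ` set (merge_pass s eps n rest) \<subseteq> fst ` set bs"
      using IH(2) image_mono[OF rest, of fst] by (rule order_trans)
    moreover have "snd ` set (merge_pass s eps n rest) \<subseteq> snd ` set bs"
      using IH(3) image_mono[OF rest, of snd] by (rule order_trans)
    moreover have "B \<in> snd ` set ((a, b) # bs)" using B(1) inside by auto
    moreover have "\<forall>q\<in>set (merge_pass s eps n rest). B < fst q"
      using IH(2) B_before by fastforce
    ultimately show ?thesis unfolding mp using IH(1) B(2) ord(1)
      by (simp add: ordered_blocks_Cons subset_insertI2)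
  qed
qed simp

lemma blocks_ordered:
  "ordered_blocks (blocks s eps n) \<and> (\<forall>p\<in>set (blocks s eps n). 1 \<le> fst p \<and> snd p \<le> n)"
proof (induction n)
  case (Suc n)
  define L where "L = blocks s eps n @ [(Suc n, Suc n)]"
  have "ordered_blocks L" unfolding L_def using Suc by (intro ordered_blocks_snoc) auto
  moreover have "\<forall>p\<in>set L. 1 \<le> fst p \<and> snd p \<le> Suc n"
    using Suc unfolding L_def by (auto simp: ordered_blocks_def)
  moreover have "blocks s eps (Suc n) = merge_pass s eps (Suc n) L" unfolding L_def by simp
  ultimately show ?case using ordered_merge_pass[of L s eps "Suc n"] by fastforce
qed (simp add: ordered_blocks_def)

lemma ordered_blocks_length_le_card:
  assumes "ordered_blocks bs" "finite A" "fst ` set bs \<subseteq> A"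
  shows "length bs \<le> card A"
proof -
  have wf: "fst p \<le> snd p" if "p \<in> set bs" for p
    using assms(1) that unfolding ordered_blocks_def by simp
  have "sorted_wrt precedes bs" using assms(1) unfolding ordered_blocks_def by simp
  then have "sorted_wrt (\<lambda>p q. fst p < fst q) bs"
    by (rule sorted_wrt_mono_rel[rotated]) (use wf in \<open>fastforce simp: precedes_def\<close>)
  then have "sorted_wrt (<) (map fst bs)" by (simp add: sorted_wrt_map)
  then have "distinct (map fst bs)" by (simp add: strict_sorted_iff)
  then have "length bs = card (fst ` set bs)" using distinct_card[of "map fst bs"] by simp
  also have "\<dots> \<le> card A" using assms(2,3) by (rule card_mono)
  finally show ?thesis .
qed

lemma two_thirds_le_ln: "2 \<le> x \<Longrightarrow> 2 / 3 \<le> ln (x :: real)"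
  using ln2_ge_two_thirds ln_le_cancel_iff[of 2 x] by linarith

lemma ln_contraction_step:
  fixes K t t' :: real
  assumes K: "1 \<le> K" and t: "2 \<le> t" and t': "t' \<le> (1 - 1 / (2 * K)) * t"
  shows "2 + 4 * K * ln (max 1 t') \<le> 4 * K * ln t"
proof -
  have "2 / 3 \<le> ln t" using two_thirds_le_ln t .
  show ?thesis
  proof (cases "t' \<le> 1")
    case True
    have "2 / 3 \<le> K * ln t"
      using K \<open>2 / 3 \<le> ln t\<close> mult_right_mono[OF K, of "ln t"] by linarith
    then show ?thesis using True by (simp add: max_def)
  next
    case False
    define d where "d = 1 / (2 * K)"
    have d: "0 < d" "d < 1" using K unfolding d_def by (auto simp: field_simps)
    have "ln t' \<le> ln ((1 - d) * t)" using False t' d unfolding d_def by (subst ln_le_cancel_iff) auto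
    also have "\<dots> = ln (1 - d) + ln t" using d t by (simp add: ln_mult)
    also have "ln (1 - d) \<le> - d" using ln_le_minus_one[of "1 - d"] d by simp
    finally have "4 * K * ln t' \<le> 4 * K * (ln t - d)" using K by simp
    also have "\<dots> = 4 * K * ln t - 2" using K unfolding d_def by (simp add: field_simps)
    finally show ?thesis using False by simp
  qed
qed

lemma merge_pass_Cons_merge:
  assumes s: "0 < s" and eps: "0 < eps" "eps < 1" and old: "a + 1 < n"
  obtains M B where "a + 2 ^ M < n" "n \<le> a + 2 ^ Suc M * marker_scale s eps"
    "merge_pass s eps n ((a, b) # bs) =
      (a, B) # merge_pass s eps n (filter (\<lambda>p. a + 2 ^ M \<le> snd p) bs)"
proof -
  define I where "I = {i. a + marker s eps i < n}"
  have "0 \<in> I" using marker_0[of eps s] eps old unfolding I_def by simp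
  have "I \<subseteq> {..<n}"
  proof
    fix i assume "i \<in> I"
    then have "2 ^ i < n" using marker_bounds(1)[OF s eps, of i] unfolding I_def by simp
    then show "i \<in> {..<n}" by (meson less_exp less_trans lessThan_iff)
  qed
  then have "finite I" by (rule finite_subset) simp
  define M where "M = Max I"
  have "M \<in> I" unfolding M_def using \<open>finite I\<close> \<open>0 \<in> I\<close> by (intro Max_in) auto
  have "Suc M \<notin> I" using Max_ge[OF \<open>finite I\<close>, of "Suc M"] unfolding M_def by auto
  have "a + marker s eps M < n" using \<open>M \<in> I\<close> unfolding I_def by simp
  then have below: "a + 2 ^ M < n" using marker_bounds(1)[OF s eps, of M] by linarith
  have "n \<le> a + marker s eps (Suc M)" using \<open>Suc M \<notin> I\<close> unfolding I_def by simp
  then have above: "n \<le> a + 2 ^ Suc M * marker_scale s eps"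
    using marker_bounds(2)[OF s eps, of "Suc M"] by linarith
  have "\<not> d \<le> a + 2 ^ M - 1 \<longleftrightarrow> a + 2 ^ M \<le> d" for d
    using one_le_power[of "2::nat" M] by arith
  then have "filter (\<lambda>(c, d). \<not> d \<le> a + 2 ^ M - 1) bs = filter (\<lambda>p. a + 2 ^ M \<le> snd p) bs"
    by (simp add: case_prod_unfold)
  then have "merge_pass s eps n ((a, b) # bs) =
      (a, Max (insert b (snd ` set (filter (\<lambda>(c, d). d \<le> a + 2 ^ M - 1) bs)))) #
      merge_pass s eps n (filter (\<lambda>p. a + 2 ^ M \<le> snd p) bs)"
    using \<open>0 \<in> I\<close> unfolding M_def I_def by (auto simp: Let_def)
  with below above show ?thesis by (rule that)
qed

lemma length_merge_pass_bound:
  fixes s eps :: real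
  assumes s: "0 < s" and eps: "0 < eps" "eps < 1"
  defines "K \<equiv> real (marker_scale s eps)"
  shows "ordered_blocks bs \<Longrightarrow> \<forall>p\<in>set bs. fst p \<le> n \<and> n \<le> fst p + t \<Longrightarrow>
    real (length (merge_pass s eps n bs)) \<le> 2 + 4 * K * ln (max 1 (real t))"
proof (induction t arbitrary: bs rule: less_induct)
  case (less t)
  have K: "2 \<le> K" using marker_scale_bounds(1)[OF s eps(1)] unfolding K_def by simp
  then have bound_nonneg: "0 \<le> 4 * K * ln (max 1 (real x))" for x by simp
  show ?case
  proof (cases bs)
    case Nil
    then show ?thesis using bound_nonneg[of t] by simp
  next
    case (Cons p bs')
    obtain a b where bs: "bs = (a, b) # bs'" using Cons by (cases p) simp
    have ord: "a \<le> b" "\<forall>q\<in>set bs'. b < fst q" "ordered_blocks bs'"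
      using less.prems(1) unfolding bs by (simp_all add: ordered_blocks_Cons)
    have "n \<le> a + t" using less.prems(2) unfolding bs by simp
    show ?thesis
    proof (cases "a + 1 < n")
      case False
      then have "fst ` set bs \<subseteq> {n - 1..n}" using less.prems(2) ord unfolding bs by force
      then have "length bs \<le> card {n - 1..n}"
        by (rule ordered_blocks_length_le_card[OF less.prems(1) finite_atLeastAtMost])
      also have "\<dots> \<le> 2" by simp
      finally have "length bs \<le> 2" .
      then have "length (merge_pass s eps n bs) \<le> 2" using length_merge_pass_le le_trans by blast
      then show ?thesis using bound_nonneg[of t] by simp
    next
      case True
      obtain M B where below: "a + 2 ^ M < n" and above: "n \<le> a + 2 ^ Suc M * marker_scale s eps"
        and mp: "merge_pass s eps n bs =
          (a, B) # merge_pass s eps n (filter (\<lambda>q. a + 2 ^ M \<le> snd q) bs')"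
        using merge_pass_Cons_merge[OF s eps True] unfolding bs by blast
      define rest where "rest = filter (\<lambda>q. a + 2 ^ M \<le> snd q) bs'"
      define t' where "t' = n - (a + 2 ^ M)"
      have "t' < t" using below \<open>n \<le> a + t\<close> one_le_power[of "2::nat" M] unfolding t'_def by linarith
      have contraction: "real t' \<le> (1 - 1 / (2 * K)) * real t"
      proof -
        have "n - a \<le> 2 ^ Suc M * marker_scale s eps" using above by linarith
        then have "real (n - a) \<le> real (2 ^ Suc M * marker_scale s eps)" by (simp only: of_nat_le_iff)
        then have "real (n - a) \<le> 2 * K * 2 ^ M" unfolding K_def by (simp add: mult_ac)
        then have "real t' \<le> (1 - 1 / (2 * K)) * real (n - a)"
          using below K unfolding t'_def by (simp add: of_nat_diff field_simps)
        also have "\<dots> \<le> (1 - 1 / (2 * K)) * real t"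
          using \<open>n \<le> a + t\<close> K by (intro mult_left_mono) auto
        finally show ?thesis .
      qed
      (* The first block of rest may straddle a + 2^M, so the induction skips it. *)
      have "real (length (merge_pass s eps n rest)) \<le> 3 + 4 * K * ln (max 1 (real t'))"
      proof (cases rest)
        case (Cons q rest')
        obtain c d where rest: "rest = (c, d) # rest'" using Cons by (cases q) simp
        obtain B' P
          where mp_rest: "merge_pass s eps n rest = (c, B') # merge_pass s eps n (filter P rest')"
          using merge_pass_Cons unfolding rest by blast
        have "ordered_blocks rest" unfolding rest_def using ord(3) by (rule ordered_blocks_filter)
        then have "ordered_blocks (filter P rest')" "\<forall>q\<in>set rest'. d < fst q"
          unfolding rest by (simp_all add: ordered_blocks_Cons ordered_blocks_filter)
        moreover have "(c, d) \<in> set rest" "set rest' \<subseteq> set rest" unfolding rest by auto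
        then have "a + 2 ^ M \<le> d" "set rest' \<subseteq> set bs" unfolding rest_def bs by auto
        ultimately have "\<forall>q\<in>set (filter P rest'). fst q \<le> n \<and> n \<le> fst q + t'"
          using less.prems(2) unfolding t'_def by fastforce
        then have "real (length (merge_pass s eps n (filter P rest')))
            \<le> 2 + 4 * K * ln (max 1 (real t'))"
          using less.IH[OF \<open>t' < t\<close> \<open>ordered_blocks (filter P rest')\<close>] by blast
        then show ?thesis unfolding mp_rest by simp
      qed (use bound_nonneg[of t'] in simp)
      also have "\<dots> \<le> 1 + 4 * K * ln (max 1 (real t))"
        using ln_contraction_step[OF _ _ contraction] K True \<open>n \<le> a + t\<close> by simp
      finally show ?thesis unfolding mp rest_def[symmetric] by simp
    qed
  qed
qed

lemma length_blocks_bound: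
  fixes s eps :: real
  assumes s: "0 < s" and eps: "0 < eps" "eps < 1"
  shows "real (length (blocks s eps n)) \<le> 2 + 4 * real (marker_scale s eps) * ln (max 1 (real n))"
proof (cases n)
  case (Suc m)
  let ?L = "blocks s eps m @ [(Suc m, Suc m)]"
  have "ordered_blocks ?L"
    using blocks_ordered[of s eps m] by (intro ordered_blocks_snoc) auto
  moreover have "\<forall>p\<in>set ?L. fst p \<le> Suc m \<and> Suc m \<le> fst p + m"
    using blocks_ordered[of s eps m] by (fastforce simp: ordered_blocks_def)
  ultimately have "real (length (blocks s eps n))
      \<le> 2 + 4 * real (marker_scale s eps) * ln (max 1 (real m))"
    unfolding Suc using length_merge_pass_bound[OF s eps] by simp
  also have "\<dots> \<le> 2 + 4 * real (marker_scale s eps) * ln (max 1 (real n))"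
    unfolding Suc by (intro add_left_mono mult_left_mono) auto
  finally show ?thesis .
qed simp

theorem lemma2:
  shows "\<exists>C>0. \<forall>s eps n. 0 < s \<longrightarrow> 0 < eps \<longrightarrow> eps < 1 \<longrightarrow> 2 \<le> n \<longrightarrow>
           real (length (blocks s eps n)) \<le> C * (1 + s / eps) * ln (real n)"
proof (intro exI[of _ 11] conjI allI impI)
  fix s eps :: real and n :: nat
  assume s: "0 < s" and eps: "0 < eps" "eps < 1" and n: "2 \<le> n"
  have "2 / 3 \<le> ln (real n)" using two_thirds_le_ln[of "real n"] n by simp
  have "real (length (blocks s eps n)) \<le> 2 + 4 * real (marker_scale s eps) * ln (real n)"
    using length_blocks_bound[OF s eps, of n] n by simp
  also have "\<dots> \<le> 2 + 4 * (s / eps + 2) * ln (real n)"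
    using marker_scale_bounds(2)[OF s eps(1)] \<open>2 / 3 \<le> ln (real n)\<close>
    by (intro add_left_mono mult_right_mono) auto
  also have "\<dots> \<le> 11 * (1 + s / eps) * ln (real n)"
  proof -
    have "0 \<le> s / eps * ln (real n)" using s eps \<open>2 / 3 \<le> ln (real n)\<close> by simp
    moreover have "11 * (1 + s / eps) * ln (real n) - (2 + 4 * (s / eps + 2) * ln (real n)) =
        (3 * ln (real n) - 2) + 7 * (s / eps * ln (real n))"
      by (simp add: algebra_simps)
    ultimately show ?thesis using \<open>2 / 3 \<le> ln (real n)\<close> by linarith
  qed
  finally show "real (length (blocks s eps n)) \<le> 11 * (1 + s / eps) * ln (real n)" .
qed simp

end
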